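(* Let $(V_1,\dots,V_n)$ be an $n$-tuple of doubly non-commuting isometries on $H$ and let $T\in B(H)$ commute with the projections $V_i^kV_i^{*k}$ for all $i=1,\dots,n$ and all $k\ge1$ (equivalently, $V_i^k(H)$ reduces $T$ for all such $i,k$). Then for every (possibly empty) $A=\{i_1,\dots,i_l\}\subseteq\{1,\dots,n\}$, every subspace $V_{i_1}^{k_{i_1}}\cdots V_{i_l}^{k_{i_l}}(W_A)$ ($k_{i_1},\dots,k_{i_l}\ge0$) reduces $T$; in particular $W_A$ reduces $T$. Consequently $H_A$ reduces $T$.
   Context: Fix $n\ge1$ and $z_{ij}\in\mathbb T$ ($i\ne j$) with $z_{ji}=\overline{z_{ij}}$; $(V_1,\dots,V_n)$ is doubly non-commuting if the $V_i$ are isometries with $V_i^*V_j=\overline{z_{ij}}V_jV_i^*$ for $i\ne j$. For an isometry $S$: $H^{\mathrm{iso}}(S)=\bigoplus_{k\ge0}S^k(\ker S^* )$, $H^{\mathrm{uni}}(S)=\bigcap_{k\ge0}S^k(H)$. With $A^c$ the complement, $H_A=\bigcap_{i\in A}H^{\mathrm{iso}}(V_i)\cap\bigcap_{i\in A^c}H^{\mathrm{uni}}(V_i)$ (empty intersection $=H$) and $W_A=\bigcap_{(m_j)\in\mathbb N_0^{A^c}}\big(\prod_{j\in A^c}V_j^{m_j}\big)\big(\bigcap_{i\in A}\ker V_i^*\big)$ (empty intersection of kernels $=H$, empty product $=$ identity). It is known that $H_A=\bigoplus_{k}V_{i_1}^{k_{i_1}}\cdots V_{i_l}^{k_{i_l}}(W_A)$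 orthogonally. *)

theory Defs
  imports "HOL-Analysis.Analysis"
begin

class complex_inner = real_normed_vector +
  fixes scaleC :: "complex \<Rightarrow> 'a \<Rightarrow> 'a"
    and cinner :: "'a \<Rightarrow> 'a \<Rightarrow> complex"
  assumes scaleC_of_real: "scaleC (complex_of_real r) x = scaleR r x"
    and scaleC_add_right: "scaleC a (x + y) = scaleC a x + scaleC a y"
    and scaleC_add_left: "scaleC (a + b) x = scaleC a x + scaleC b x"
    and scaleC_scaleC: "scaleC a (scaleC b x) = scaleC (a * b) x"
    and scaleC_one: "scaleC 1 x = x"
    and cinner_commute: "cinner x y = cnj (cinner y x)"
    and cinner_add_left: "cinner (x + y) z = cinner x z + cinner y z"
    and cinner_scaleC_left: "cinner (scaleC a x) y = cnj a * cinner x y"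
    and cinner_ge_zero: "0 \<le> Re (cinner x x)"
    and cinner_eq_zero_iff: "cinner x x = 0 \<longleftrightarrow> x = 0"
    and norm_eq_sqrt_cinner: "norm x = sqrt (Re (cinner x x))"

class chilbert_space = complex_inner + complete_space

definition clinear :: "('a::complex_inner \<Rightarrow> 'b::complex_inner) \<Rightarrow> bool" where
  "clinear f \<longleftrightarrow> (\<forall>x y. f (x + y) = f x + f y) \<and> (\<forall>c x. f (scaleC c x) = scaleC c (f x))"

definition bounded_clinear :: "('a::complex_inner \<Rightarrow> 'b::complex_inner) \<Rightarrow> bool" where
  "bounded_clinear f \<longleftrightarrow> clinear f \<and> (\<exists>K. \<forall>x. norm (f x) \<le> norm x * K)"

definition is_adjoint :: "('a::complex_inner \<Rightarrow> 'a) \<Rightarrow> ('a \<Rightarrow> 'a) \<Rightarrow> bool" where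
  "is_adjoint T S \<longleftrightarrow> (\<forall>x y. cinner (T x) y = cinner x (S y))"

definition isometry :: "('a::complex_inner \<Rightarrow> 'a) \<Rightarrow> bool" where
  "isometry V \<longleftrightarrow> bounded_clinear V \<and> (\<forall>x. norm (V x) = norm x)"

definition kernel :: "('a::complex_inner \<Rightarrow> 'a) \<Rightarrow> 'a set" where
  "kernel S = {x. S x = 0}"

definition cspan :: "'a::complex_inner set \<Rightarrow> 'a set" where
  "cspan M = {\<Sum>x\<in>F. scaleC (c x) x | F c. finite F \<and> F \<subseteq> M}"

definition ccspan :: "'a::complex_inner set \<Rightarrow> 'a set" where
  "ccspan M = closure (cspan M)"

definition orth :: "'a::complex_inner set \<Rightarrow> 'a set" where
  "orth M = {y. \<forall>x\<in>M. cinner x y = 0}"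

definition reduces :: "'a::complex_inner set \<Rightarrow> ('a \<Rightarrow> 'a) \<Rightarrow> bool" where
  "reduces M T \<longleftrightarrow> T ` M \<subseteq> M \<and> T ` orth M \<subseteq> orth M"

definition doubly_noncommuting ::
  "nat \<Rightarrow> (nat \<Rightarrow> nat \<Rightarrow> complex) \<Rightarrow> (nat \<Rightarrow> 'a::complex_inner \<Rightarrow> 'a) \<Rightarrow> (nat \<Rightarrow> 'a \<Rightarrow> 'a) \<Rightarrow> bool" where
  "doubly_noncommuting n z V Vs \<longleftrightarrow>
     (\<forall>i\<in>{1..n}. isometry (V i) \<and> bounded_clinear (Vs i) \<and> is_adjoint (V i) (Vs i)) \<and>
     (\<forall>i\<in>{1..n}. \<forall>j\<in>{1..n}. i \<noteq> j \<longrightarrow>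
        cmod (z i j) = 1 \<and> z j i = cnj (z i j) \<and>
        (\<forall>x. Vs i (V j x) = scaleC (cnj (z i j)) (V j (Vs i x))))"

definition H_iso :: "('a::complex_inner \<Rightarrow> 'a) \<Rightarrow> ('a \<Rightarrow> 'a) \<Rightarrow> 'a set" where
  "H_iso S Ss = ccspan (\<Union>k. (S ^^ k) ` kernel Ss)"

definition H_uni :: "('a::complex_inner \<Rightarrow> 'a) \<Rightarrow> 'a set" where
  "H_uni S = (\<Inter>k. range (S ^^ k))"

definition H_A :: "nat \<Rightarrow> (nat \<Rightarrow> 'a::complex_inner \<Rightarrow> 'a) \<Rightarrow> (nat \<Rightarrow> 'a \<Rightarrow> 'a) \<Rightarrow> nat set \<Rightarrow> 'a set" where
  "H_A n V Vs A = (\<Inter>i\<in>A. H_iso (V i) (Vs i)) \<inter> (\<Inter>i\<in>{1..n} - A. H_uni (V i))"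

definition prod_pow :: "(nat \<Rightarrow> 'a \<Rightarrow> 'a) \<Rightarrow> nat set \<Rightarrow> (nat \<Rightarrow> nat) \<Rightarrow> 'a \<Rightarrow> 'a" where
  "prod_pow V B m = foldr (\<lambda>j f. (V j ^^ m j) \<circ> f) (sorted_list_of_set B) id"

definition W_A :: "nat \<Rightarrow> (nat \<Rightarrow> 'a::complex_inner \<Rightarrow> 'a) \<Rightarrow> (nat \<Rightarrow> 'a \<Rightarrow> 'a) \<Rightarrow> nat set \<Rightarrow> 'a set" where
  "W_A n V Vs A = (\<Inter>m::nat \<Rightarrow> nat. prod_pow V ({1..n} - A) m ` (\<Inter>i\<in>A. kernel (Vs i)))"

end

theory Submission
  imports Defs
begin

text \<open>Each of the subspaces is the set of common fixed points of commuting orthogonal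
  projections, one for every index i: either V_i^k V_i*^k - V_i^(k+1) V_i*^(k+1), onto
  V_i^k (ker V_i*), or the strong limit U_i of V_i^k V_i*^k, onto the unitary part of V_i, or
  I - U_i, onto its pure part. All of them lie in the bicommutant of the family
  (V_i^k V_i*^k)_k. For i \<noteq> j the doubly non-commuting relations make V_j and V_j* commute
  with V_i^k V_i*^k, the unimodular factors coming from the two sides cancelling. Hence
  projections belonging to different indices commute, and T commutes with all of them;
  their product is a projection onto the intersection that commutes with T, and the range
  of such a projection reduces T. That V^k (W_A) is such an intersection follows from
  W_A = (\<Inter>i\<in>A. ker V_i*) \<inter> (\<Inter>j\<notin>A. H_uni (V_j)): the power V_i^(k_i) maps ker V_i*
  onto V_i^(k_i) (ker V_i*) and, like V_i*^(k_i), preserves the conditions belonging to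
  the other indices.\<close>

section \<open>Complex inner products and linear maps\<close>

lemma cinner_add_right: "cinner x (y + z) = cinner x y + cinner (x::'a::complex_inner) z"
  by (metis cinner_commute cinner_add_left complex_cnj_add)

lemma cinner_scaleC_right: "cinner x (scaleC a y) = a * cinner (x::'a::complex_inner) y"
  by (metis cinner_commute cinner_scaleC_left complex_cnj_cnj complex_cnj_mult)

lemma scaleC_zero_right [simp]: "scaleC a (0::'a::complex_inner) = 0"
  using scaleC_add_right[of a 0 0] by simp

lemma cinner_zero_left [simp]: "cinner 0 (y::'a::complex_inner) = 0"
  using cinner_add_left[of 0 0 y] by simp

lemma cinner_zero_right [simp]: "cinner (y::'a::complex_inner) 0 = 0"
  using cinner_commute[of y 0] by simp

lemma cinner_diff_left: "cinner (x - z) (y::'a::complex_inner) = cinner x y - cinner z y"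
  using cinner_add_left[of "x - z" z y] by (simp add: algebra_simps)

lemma cinner_diff_right: "cinner y (x - z::'a::complex_inner) = cinner y x - cinner y z"
  using cinner_add_right[of y "x - z" z] by (simp add: algebra_simps)

lemma cinner_self: "cinner x x = complex_of_real ((norm (x::'a::complex_inner))\<^sup>2)"
proof -
  have "Im (cinner x x) = 0"
    using cinner_commute[of x x] by (metis Reals_cnj_iff complex_is_Real_iff)
  moreover have "Re (cinner x x) = (norm x)\<^sup>2"
    using norm_eq_sqrt_cinner[of x] cinner_ge_zero[of x] by simp
  ultimately show ?thesis by (simp add: complex_eq_iff)
qed

lemma cinner_ext: "(\<And>y. cinner y a = cinner y b) \<Longrightarrow> (a::'a::complex_inner) = b"
  using cinner_eq_zero_iff[of "a - b"] by (simp add: cinner_diff_right)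

lemma norm_scaleC: "norm (scaleC a x) = cmod a * norm (x::'a::complex_inner)"
proof -
  have "cinner (scaleC a x) (scaleC a x) = cnj a * a * cinner x x"
    by (simp add: cinner_scaleC_left cinner_scaleC_right)
  hence "complex_of_real ((norm (scaleC a x))\<^sup>2) = cnj a * a * complex_of_real ((norm x)\<^sup>2)"
    by (simp only: cinner_self)
  also have "cnj a * a = complex_of_real ((cmod a)\<^sup>2)"
    by (metis complex_norm_square mult.commute)
  finally have "complex_of_real ((norm (scaleC a x))\<^sup>2) = complex_of_real ((cmod a * norm x)\<^sup>2)"
    by (simp only: power_mult_distrib of_real_mult)
  hence "(norm (scaleC a x))\<^sup>2 = (cmod a * norm x)\<^sup>2"
    by (simp only: of_real_eq_iff)
  thus ?thesis by (simp add: power2_eq_iff_nonneg)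
qed

lemma cauchy_schwarz: "cmod (cinner x y) \<le> norm x * norm (y::'a::complex_inner)"
proof (cases "y = 0")
  case True thus ?thesis by simp
next
  case False
  define t where "t = cinner y x / cinner y y"
  have yy: "cinner y y = complex_of_real ((norm y)\<^sup>2)" by (rule cinner_self)
  have ny: "norm y > 0" using False by simp
  have mc: "cinner y x * cnj (cinner y x) = (complex_of_real (cmod (cinner y x)))\<^sup>2"
    by (metis complex_norm_square of_real_power)
  have "cinner (x - scaleC t y) (x - scaleC t y) =
     cinner x x - t * cinner x y - cnj t * cinner y x + cnj t * t * cinner y y"
    by (simp add: cinner_diff_left cinner_diff_right cinner_scaleC_left cinner_scaleC_right algebra_simps)
  also have "\<dots> = complex_of_real ((norm x)\<^sup>2 - (cmod (cinner y x))\<^sup>2 / (norm y)\<^sup>2)"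
    unfolding t_def yy cinner_commute[of x y] cinner_self[of x] using ny mc
    by (simp add: field_simps power2_eq_square)
  finally have "0 \<le> (norm x)\<^sup>2 - (cmod (cinner y x))\<^sup>2 / (norm y)\<^sup>2"
    using cinner_ge_zero[of "x - scaleC t y"] by simp
  hence "(cmod (cinner y x))\<^sup>2 \<le> (norm x * norm y)\<^sup>2"
    using ny by (simp add: field_simps power_mult_distrib)
  hence "cmod (cinner y x) \<le> norm x * norm y"
    by (simp add: power2_le_iff_abs_le)
  thus ?thesis by (metis cinner_commute complex_mod_cnj)
qed

lemma sum_in_cspan:
  assumes "finite I" "\<And>k. k \<in> I \<Longrightarrow> t k \<in> M"
  shows "(\<Sum>k\<in>I. t k) \<in> cspan M"
proof -
  let ?c = "\<lambda>x. of_nat (card {k \<in> I. t k = x}) :: complex"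
  have "(\<Sum>k\<in>I. t k) = (\<Sum>x\<in>t ` I. \<Sum>k\<in>{k \<in> I. t k = x}. t k)"
    by (rule sum.image_gen[OF assms(1)])
  also have "\<dots> = (\<Sum>x\<in>t ` I. scaleC (?c x) x)"
  proof (rule sum.cong[OF refl])
    fix x
    have "(\<Sum>k\<in>{k \<in> I. t k = x}. t k) = (\<Sum>k\<in>{k \<in> I. t k = x}. x)"
      by (rule sum.cong) auto
    also have "\<dots> = scaleR (real (card {k \<in> I. t k = x})) x"
      by (rule sum_constant_scaleR)
    also have "\<dots> = scaleC (?c x) x"
      using scaleC_of_real[of "real (card {k \<in> I. t k = x})" x] by simp
    finally show "(\<Sum>k\<in>{k \<in> I. t k = x}. t k) = scaleC (?c x) x" .
  qed
  finally show ?thesis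
    unfolding cspan_def mem_Collect_eq using assms
    by (intro exI[of _ "t ` I"] exI[of _ ?c]) auto
qed

lemma clinear_linear: "clinear f \<Longrightarrow> linear f"
  unfolding clinear_def linear_iff by (metis scaleC_of_real)

lemma clinear_scaleC: "clinear f \<Longrightarrow> f (scaleC c x) = scaleC c (f x)"
  unfolding clinear_def by blast

lemma clinear_funpow: "clinear (f::'a::complex_inner \<Rightarrow> 'a) \<Longrightarrow> clinear (f ^^ k)"
  by (induction k) (simp_all add: clinear_def)

lemma bounded_clinear_bounded_linear: "bounded_clinear f \<Longrightarrow> bounded_linear f"
  unfolding bounded_clinear_def bounded_linear_def bounded_linear_axioms_def
  using clinear_linear by blast

lemma bounded_linear_funpow: "bounded_linear (f::'a::real_normed_vector \<Rightarrow> 'a) \<Longrightarrow> bounded_linear (f ^^ k)"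
proof (induction k)
  case (Suc k)
  then show ?case
    using bounded_linear_compose[of f "f ^^ k"] by (simp add: comp_def)
qed (simp add: id_def bounded_linear_ident)

lemma bounded_linear_scaleC: "bounded_linear (\<lambda>v::'a::complex_inner. scaleC a v)"
proof (rule bounded_linear_intro[where K="cmod a"])
  show "scaleC a (scaleR r x) = scaleR r (scaleC a x)" for r and x :: 'a
    by (simp add: scaleC_scaleC mult.commute flip: scaleC_of_real)
qed (simp_all add: scaleC_add_right norm_scaleC mult.commute)

lemma bounded_linear_cinner_left: "bounded_linear (\<lambda>v::'a::complex_inner. cinner v y)"
proof (rule bounded_linear_intro[where K="norm y"])
  show "cinner (scaleR r x) y = scaleR r (cinner x y)" for r and x :: 'a
    by (simp add: cinner_scaleC_left scaleR_conv_of_real flip: scaleC_of_real)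
qed (simp_all add: cinner_add_left cauchy_schwarz)

lemma bounded_linear_cinner_right: "bounded_linear (\<lambda>v::'a::complex_inner. cinner y v)"
proof (rule bounded_linear_intro[where K="norm y"])
  show "cinner y (scaleR r x) = scaleR r (cinner y x)" for r and x :: 'a
    by (simp add: cinner_scaleC_right scaleR_conv_of_real flip: scaleC_of_real)
  show "norm (cinner y x) \<le> norm x * norm y" for x :: 'a
    using cauchy_schwarz[of y x] by (simp add: mult.commute)
qed (simp add: cinner_add_right)

lemma funpow_left_inverse:
  fixes f g :: "'a \<Rightarrow> 'a"
  shows "(\<And>x. g (f x) = x) \<Longrightarrow> (g ^^ k) ((f ^^ k) x) = x"
proof (induction k arbitrary: x)
  case (Suc k)
  have "(g ^^ Suc k) ((f ^^ Suc k) x) = (g ^^ k) (g (f ((f ^^ k) x)))"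
    by (simp only: funpow_Suc_right[where f=g and n=k] funpow.simps(2)[where f=f and n=k] comp_apply)
  with Suc show ?case by simp
qed simp

lemma funpow_commute: "(\<And>x. S (f x) = f (S x)) \<Longrightarrow> S ((f ^^ k) x) = (f ^^ k) (S x)"
  by (induction k) simp_all

lemma funpow_twisted_commute:
  assumes "clinear A" "\<And>x. A (B x) = scaleC l (B (A x))"
  shows "(A ^^ a) (B x) = scaleC (l ^ a) (B ((A ^^ a) x))"
proof (induction a)
  case (Suc a)
  then show ?case
    by (simp add: clinear_scaleC[OF assms(1)] assms(2) scaleC_scaleC mult.commute)
qed (simp add: scaleC_one)

lemma funpow_comp_commute_twisted:
  assumes "clinear A" "clinear C"
    and "\<And>x. A (B x) = scaleC l (B (A x))" "\<And>x. C (B x) = scaleC l' (B (C x))" "l' * l = 1"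
  shows "(C ^^ a) ((A ^^ a) (B x)) = B ((C ^^ a) ((A ^^ a) x))"
proof -
  have "(C ^^ a) ((A ^^ a) (B x)) = scaleC (l' ^ a * l ^ a) (B ((C ^^ a) ((A ^^ a) x)))"
    by (simp add: funpow_twisted_commute[where A=A and B=B and l=l, OF assms(1,3)]
        funpow_twisted_commute[where A=C and B=B and l=l', OF assms(2,4)]
        clinear_scaleC[OF clinear_funpow[OF assms(2)]] scaleC_scaleC mult.commute)
  thus ?thesis by (simp add: assms(5) scaleC_one flip: power_mult_distrib)
qed

section \<open>Commuting projections and reducing subspaces\<close>

definition commute :: "('a \<Rightarrow> 'a) \<Rightarrow> ('a \<Rightarrow> 'a) \<Rightarrow> bool" where
  "commute S E \<longleftrightarrow> S \<circ> E = E \<circ> S"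

lemma commute_iff: "commute S E \<longleftrightarrow> (\<forall>x. S (E x) = E (S x))"
  unfolding commute_def by (auto simp: fun_eq_iff)

lemma commute_sym: "commute S E \<Longrightarrow> commute E S"
  unfolding commute_def by simp

lemma commute_fixed_points: "commute S E \<Longrightarrow> E x = x \<Longrightarrow> E (S x) = S x"
  unfolding commute_iff by metis

definition is_projection :: "('a::complex_inner \<Rightarrow> 'a) \<Rightarrow> bool" where
  "is_projection E \<longleftrightarrow> (\<forall>x y. cinner (E x) y = cinner x (E y)) \<and> (\<forall>x. E (E x) = E x)"

lemma is_projection_comp:
  assumes E: "is_projection E" and F: "is_projection F" and EF: "commute E F"
  shows "is_projection (E \<circ> F)"
    and "{x. (E \<circ> F) x = x} = {x. E x = x} \<inter> {x. F x = x}"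
proof -
  have EF': "E (F x) = F (E x)" for x using EF by (simp add: commute_iff)
  show "is_projection (E \<circ> F)"
    using E F unfolding is_projection_def by (simp add: EF')
  have "E x = x \<and> F x = x" if "E (F x) = x" for x
    using E F that EF' unfolding is_projection_def by metis
  thus "{x. (E \<circ> F) x = x} = {x. E x = x} \<inter> {x. F x = x}" by auto
qed

lemma projection_onto_common_fixed_points:
  fixes E :: "'i \<Rightarrow> 'a::complex_inner \<Rightarrow> 'a"
  assumes "finite J" "\<And>j. j \<in> J \<Longrightarrow> is_projection (E j)"
    and "\<And>i j. i \<in> J \<Longrightarrow> j \<in> J \<Longrightarrow> commute (E i) (E j)"
  shows "\<exists>F. is_projection F \<and> {x. F x = x} = (\<Inter>j\<in>J. {x. E j x = x})
           \<and> (\<forall>S. (\<forall>j\<in>J. commute S (E j)) \<longrightarrow> commute S F)"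
  using assms
proof (induction J rule: finite_induct)
  case empty
  show ?case by (intro exI[of _ id]) (auto simp: is_projection_def commute_def)
next
  case (insert j J)
  then obtain F where F: "is_projection F" "{x. F x = x} = (\<Inter>j\<in>J. {x. E j x = x})"
    and F_comm: "\<And>S. \<forall>j\<in>J. commute S (E j) \<Longrightarrow> commute S F"
    by blast
  have EjF: "commute (E j) F" using F_comm insert.prems(2) by blast
  have "commute S (E j \<circ> F)" if "\<forall>i\<in>insert j J. commute S (E i)" for S
    using that F_comm[of S] unfolding commute_def by (metis comp_assoc insert_iff)
  moreover have "{x. (E j \<circ> F) x = x} = (\<Inter>i\<in>insert j J. {x. E i x = x})"
    using is_projection_comp(2)[OF insert.prems(1) F(1) EjF] F(2) by simp
  ultimately show ?case
    using is_projection_comp(1)[OF insert.prems(1) F(1) EjF] by blast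
qed

lemma reduces_fixed_points:
  assumes E: "is_projection E" and TE: "commute T E" and T0: "T 0 = 0"
  shows "reduces {x. E x = x} T"
  unfolding reduces_def
proof
  show "T ` {x. E x = x} \<subseteq> {x. E x = x}"
    using commute_fixed_points[OF TE] by auto
  have "T y \<in> orth {x. E x = x}" if y: "y \<in> orth {x. E x = x}" for y
  proof -
    have "cinner (E y) (E y) = cinner (E y) y"
      using E unfolding is_projection_def by metis
    also have "\<dots> = 0" using y E unfolding orth_def is_projection_def by auto
    finally have "E y = 0" using cinner_eq_zero_iff by blast
    have "cinner x (T y) = 0" if "E x = x" for x
    proof -
      have "cinner x (T y) = cinner x (E (T y))"
        using E that unfolding is_projection_def by metis
      also have "E (T y) = T (E y)" using TE by (simp add: commute_iff)
      finally show ?thesis using \<open>E y = 0\<close> T0 by simp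
    qed
    thus ?thesis unfolding orth_def by blast
  qed
  thus "T ` orth {x. E x = x} \<subseteq> orth {x. E x = x}" by blast
qed

lemma reduces_common_fixed_points:
  fixes E :: "'i \<Rightarrow> 'a::complex_inner \<Rightarrow> 'a"
  assumes "finite J" "\<And>j. j \<in> J \<Longrightarrow> is_projection (E j)"
    and "\<And>i j. i \<in> J \<Longrightarrow> j \<in> J \<Longrightarrow> commute (E i) (E j)"
    and "\<And>j. j \<in> J \<Longrightarrow> commute T (E j)" and "T 0 = 0"
  shows "reduces (\<Inter>j\<in>J. {x. E j x = x}) T"
proof -
  obtain F where "is_projection F" "{x. F x = x} = (\<Inter>j\<in>J. {x. E j x = x})" "commute T F"
    using projection_onto_common_fixed_points[of J E, OF assms(1-3)] assms(4) by blast
  thus ?thesis using reduces_fixed_points assms(5) by metis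
qed

lemma image_funpow_Int_invariant:
  assumes "\<And>x. g (f x) = x"
    and "\<And>x. x \<in> D \<Longrightarrow> (f ^^ k) x \<in> D" "\<And>x. x \<in> D \<Longrightarrow> (g ^^ k) x \<in> D"
  shows "(f ^^ k) ` (D \<inter> S) = D \<inter> (f ^^ k) ` S"
proof (intro equalityI subsetI)
  fix x assume "x \<in> D \<inter> (f ^^ k) ` S"
  then obtain s where s: "x \<in> D" "s \<in> S" "x = (f ^^ k) s" by blast
  have "s = (g ^^ k) x"
    using s(3) funpow_left_inverse[of g f] assms(1) by simp
  hence "s \<in> D \<inter> S" using s(1,2) assms(3) by simp
  thus "x \<in> (f ^^ k) ` (D \<inter> S)" using s(3) by blast
qed (use assms(2) in auto)

lemma image_foldr_funpow:
  fixes V Vs :: "'i \<Rightarrow> 'a \<Rightarrow> 'a"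
  assumes "distinct L"
    and "\<And>j x. j \<in> set L \<Longrightarrow> Vs j (V j x) = x"
    and "\<And>j l a b x. j \<in> set L \<Longrightarrow> l \<in> set L \<Longrightarrow> j \<noteq> l \<Longrightarrow> x \<in> (V l ^^ a) ` S l \<Longrightarrow>
           (V j ^^ b) x \<in> (V l ^^ a) ` S l \<and> (Vs j ^^ b) x \<in> (V l ^^ a) ` S l"
    and "\<And>j b x. j \<in> set L \<Longrightarrow> x \<in> C \<Longrightarrow> (V j ^^ b) x \<in> C \<and> (Vs j ^^ b) x \<in> C"
  shows "foldr (\<lambda>j f. (V j ^^ m j) \<circ> f) L id ` (C \<inter> (\<Inter>j\<in>set L. S j))
           = C \<inter> (\<Inter>j\<in>set L. (V j ^^ m j) ` S j)"
  using assms
proof (induction L arbitrary: C)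
  case Nil
  show ?case by simp
next
  case (Cons j L)
  let ?Y = "\<Inter>l\<in>set L. (V l ^^ m l) ` S l"
  have j: "j \<notin> set L" using Cons.prems(1) by simp
  have "foldr (\<lambda>j f. (V j ^^ m j) \<circ> f) L id ` ((C \<inter> S j) \<inter> (\<Inter>l\<in>set L. S l))
        = (C \<inter> S j) \<inter> ?Y"
  proof (rule Cons.IH)
    show "distinct L" using Cons.prems(1) by simp
    show "Vs l (V l x) = x" if "l \<in> set L" for l x
      using that Cons.prems(2) by simp
    show "(V l ^^ b) x \<in> (V l' ^^ a) ` S l' \<and> (Vs l ^^ b) x \<in> (V l' ^^ a) ` S l'"
      if "l \<in> set L" "l' \<in> set L" "l \<noteq> l'" "x \<in> (V l' ^^ a) ` S l'" for l l' a b x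
      using Cons.prems(3)[where j=l and l=l' and a=a and b=b and x=x] that by simp
  next
    fix l b x assume l: "l \<in> set L" and x: "x \<in> C \<inter> S j"
    have "l \<noteq> j" "x \<in> (V j ^^ 0) ` S j" using l j x by auto
    thus "(V l ^^ b) x \<in> C \<inter> S j \<and> (Vs l ^^ b) x \<in> C \<inter> S j"
      using Cons.prems(3)[where j=l and l=j and a=0 and b=b and x=x]
        Cons.prems(4)[where j=l and b=b and x=x] l x
      by auto
  qed
  hence "foldr (\<lambda>j f. (V j ^^ m j) \<circ> f) (j # L) id ` (C \<inter> (\<Inter>l\<in>set (j # L). S l))
        = (V j ^^ m j) ` ((C \<inter> ?Y) \<inter> S j)"
    by (simp add: Int_ac flip: image_image)
  also have "\<dots> = (C \<inter> ?Y) \<inter> (V j ^^ m j) ` S j"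
  proof (rule image_funpow_Int_invariant)
    show "Vs j (V j x) = x" for x using Cons.prems(2) by simp
    have "(V j ^^ b) x \<in> (V l ^^ m l) ` S l \<and> (Vs j ^^ b) x \<in> (V l ^^ m l) ` S l"
      if "x \<in> ?Y" "l \<in> set L" for b x l
      using Cons.prems(3)[where j=j and l=l and a="m l" and b=b and x=x] that j by auto
    thus "(V j ^^ m j) x \<in> C \<inter> ?Y" "(Vs j ^^ m j) x \<in> C \<inter> ?Y" if "x \<in> C \<inter> ?Y" for x
      using that Cons.prems(4)[of j x "m j"] by auto
  qed
  finally show ?case by (simp only: list.set(2) INT_insert Int_ac)
qed

lemma image_prod_pow:
  fixes V Vs :: "nat \<Rightarrow> 'a \<Rightarrow> 'a"
  assumes "finite B"
    and "\<And>j x. j \<in> B \<Longrightarrow> Vs j (V j x) = x"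
    and "\<And>j l a b x. j \<in> B \<Longrightarrow> l \<in> B \<Longrightarrow> j \<noteq> l \<Longrightarrow> x \<in> (V l ^^ a) ` S l \<Longrightarrow>
           (V j ^^ b) x \<in> (V l ^^ a) ` S l \<and> (Vs j ^^ b) x \<in> (V l ^^ a) ` S l"
    and "\<And>j b x. j \<in> B \<Longrightarrow> x \<in> C \<Longrightarrow> (V j ^^ b) x \<in> C \<and> (Vs j ^^ b) x \<in> C"
  shows "prod_pow V B m ` (C \<inter> (\<Inter>j\<in>B. S j)) = C \<inter> (\<Inter>j\<in>B. (V j ^^ m j) ` S j)"
proof -
  have L: "distinct (sorted_list_of_set B)" "set (sorted_list_of_set B) = B"
    using assms(1) by simp_all
  show ?thesis
    unfolding prod_pow_def
    by (rule image_foldr_funpow[where L="sorted_list_of_set B", unfolded L(2), OF L(1) assms(2-4)])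
qed

section \<open>Wold decomposition of a single isometry\<close>

definition range_proj :: "('a \<Rightarrow> 'a) \<Rightarrow> ('a \<Rightarrow> 'a) \<Rightarrow> nat \<Rightarrow> 'a \<Rightarrow> 'a" where
  "range_proj V Vs k = (V ^^ k) \<circ> (Vs ^^ k)"

text \<open>A strong limit; the sequence converges when \<open>V\<close> is an isometry with adjoint \<open>Vs\<close>
  (see \<open>convergent_range_proj\<close>), otherwise \<open>lim\<close> returns an unspecified value.\<close>
definition unitary_proj :: "('a::complex_inner \<Rightarrow> 'a) \<Rightarrow> ('a \<Rightarrow> 'a) \<Rightarrow> 'a \<Rightarrow> 'a" where
  "unitary_proj V Vs x = lim (\<lambda>k. range_proj V Vs k x)"

definition wandering_proj :: "('a::complex_inner \<Rightarrow> 'a) \<Rightarrow> ('a \<Rightarrow> 'a) \<Rightarrow> nat \<Rightarrow> 'a \<Rightarrow> 'a" where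
  "wandering_proj V Vs k x = range_proj V Vs k x - range_proj V Vs (Suc k) x"

definition range_bicommutant :: "('a::complex_inner \<Rightarrow> 'a) \<Rightarrow> ('a \<Rightarrow> 'a) \<Rightarrow> ('a \<Rightarrow> 'a) set" where
  "range_bicommutant V Vs = {E. bounded_linear E \<and>
     (\<forall>S. bounded_linear S \<longrightarrow> (\<forall>k. commute S (range_proj V Vs k)) \<longrightarrow> commute S E)}"

locale isometry_with_adjoint =
  fixes V Vs :: "'a::chilbert_space \<Rightarrow> 'a"
  assumes isometry: "isometry V"
    and adjoint: "is_adjoint V Vs"
    and bounded_adjoint: "bounded_clinear Vs"
begin

abbreviation P where "P \<equiv> range_proj V Vs"
abbreviation U where "U \<equiv> unitary_proj V Vs"

lemma clinear_V: "clinear V" and clinear_Vs: "clinear Vs"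
  using isometry bounded_adjoint unfolding isometry_def bounded_clinear_def by auto

lemma bounded_linear_V: "bounded_linear V" and bounded_linear_Vs: "bounded_linear Vs"
  using isometry bounded_adjoint bounded_clinear_bounded_linear unfolding isometry_def by auto

lemma V_zero [simp]: "V 0 = 0" and Vs_zero [simp]: "Vs 0 = 0"
  using linear_0 clinear_linear clinear_V clinear_Vs by blast+

lemma funpow_V_zero [simp]: "(V ^^ k) 0 = 0" and funpow_Vs_zero [simp]: "(Vs ^^ k) 0 = 0"
  by (induction k) simp_all

lemma norm_V [simp]: "norm (V x) = norm x"
  using isometry unfolding isometry_def by blast

lemma cinner_V_left: "cinner (V x) y = cinner x (Vs y)"
  using adjoint unfolding is_adjoint_def by blast

text \<open>Cauchy--Schwarz and isometry give \<open>norm (Vs (V x)) \<le> norm x\<close>, while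
  \<open>cinner x (Vs (V x)) = (norm x)\<^sup>2\<close>; together they force \<open>Vs (V x) = x\<close>.\<close>
lemma left_inverse [simp]: "Vs (V x) = x"
proof -
  define u where "u = Vs (V x)"
  have xu: "cinner x u = complex_of_real ((norm x)\<^sup>2)"
    using cinner_V_left[of x "V x"] by (simp add: u_def cinner_self)
  have ux: "cinner u x = complex_of_real ((norm x)\<^sup>2)"
    using xu cinner_commute[of u x] by simp
  have "cinner (V u) (V x) = complex_of_real ((norm u)\<^sup>2)"
    using cinner_V_left[of u "V x"] by (simp add: u_def cinner_self)
  moreover have "cmod (cinner (V u) (V x)) \<le> norm u * norm x"
    using cauchy_schwarz[of "V u" "V x"] by simp
  ultimately have "norm u * norm u \<le> norm u * norm x"
    by (simp add: power2_eq_square norm_mult)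
  hence "norm u \<le> norm x"
    using mult_le_cancel_left_pos[of "norm u" "norm u" "norm x"] by (cases "u = 0") auto
  moreover have "complex_of_real ((norm (u - x))\<^sup>2) = complex_of_real ((norm u)\<^sup>2 - (norm x)\<^sup>2)"
    unfolding cinner_self[symmetric]
    by (simp add: cinner_diff_left cinner_diff_right xu ux cinner_self[of u] cinner_self[of x])
  ultimately have "(norm (u - x))\<^sup>2 \<le> 0"
    by (simp only: of_real_eq_iff) (simp add: power_mono)
  thus ?thesis unfolding u_def by simp
qed

lemma cinner_V_V: "cinner (V x) (V y) = cinner x y"
  by (simp add: cinner_V_left)

lemma left_inverse_funpow [simp]: "(Vs ^^ k) ((V ^^ k) x) = x"
  by (rule funpow_left_inverse) simp

lemma cinner_funpow_V_left: "cinner ((V ^^ k) x) y = cinner x ((Vs ^^ k) y)"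
proof (induction k arbitrary: y)
  case (Suc k)
  have "cinner ((V ^^ Suc k) x) y = cinner ((V ^^ k) x) (Vs y)"
    by (simp add: cinner_V_left)
  also have "\<dots> = cinner x ((Vs ^^ Suc k) y)"
    by (simp add: Suc funpow_swap1)
  finally show ?case .
qed simp

lemma range_proj_apply: "P k x = (V ^^ k) ((Vs ^^ k) x)"
  unfolding range_proj_def by simp

lemma range_proj_0 [simp]: "P 0 x = x"
  unfolding range_proj_def by simp

lemma clinear_range_proj: "clinear (P k)"
  unfolding range_proj_def using clinear_funpow[OF clinear_V] clinear_funpow[OF clinear_Vs]
  by (simp add: clinear_def)

lemma bounded_linear_range_proj: "bounded_linear (P k)"
  unfolding range_proj_def comp_def
  by (intro bounded_linear_compose[OF bounded_linear_funpow[OF bounded_linear_V]]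
      bounded_linear_funpow[OF bounded_linear_Vs])

lemma range_proj_selfadjoint: "cinner (P k x) y = cinner x (P k y)"
  unfolding range_proj_apply
  by (metis cinner_funpow_V_left cinner_commute)

lemma range_proj_absorb:
  assumes "a \<le> b"
  shows "P a (P b x) = P b x" "P b (P a x) = P b x"
proof -
  obtain d where d: "b = a + d" using assms le_Suc_ex by blast
  show "P a (P b x) = P b x"
    unfolding range_proj_apply d by (simp add: funpow_add)
  have "(Vs ^^ b) ((V ^^ a) y) = (Vs ^^ d) y" for y
    unfolding d by (simp add: funpow_add add.commute[of a d])
  moreover have "(Vs ^^ d) ((Vs ^^ a) x) = (Vs ^^ b) x"
    unfolding d by (simp add: funpow_add add.commute[of a d])
  ultimately show "P b (P a x) = P b x"
    unfolding range_proj_apply by simp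
qed

lemma range_proj_fixed_points: "{x. P k x = x} = range (V ^^ k)"
  by (auto simp: range_proj_apply) (metis rangeI)

lemma range_proj_commute: "commute (P a) (P b)"
  unfolding commute_iff by (metis nat_le_linear range_proj_absorb)

lemma norm_range_proj_diff:
  assumes "a \<le> b"
  shows "(norm (P a x - P b x))\<^sup>2 = (norm (P a x))\<^sup>2 - (norm (P b x))\<^sup>2"
proof -
  have ab: "cinner (P a x) (P b x) = cinner x (P b x)"
    using range_proj_selfadjoint[of a x "P b x"] range_proj_absorb[OF assms] by simp
  have ba: "cinner (P b x) (P a x) = cinner x (P b x)"
    using range_proj_selfadjoint[of b x "P a x"] range_proj_absorb[OF assms] by simp
  have bb: "cinner (P b x) (P b x) = cinner x (P b x)"
    using range_proj_selfadjoint[of b x "P b x"] range_proj_absorb[of b b] by simp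
  have "cinner (P a x - P b x) (P a x - P b x) = cinner (P a x) (P a x) - cinner (P b x) (P b x)"
    by (simp add: cinner_diff_left cinner_diff_right ab ba bb)
  thus ?thesis by (simp only: cinner_self flip: of_real_diff) (simp only: of_real_eq_iff)
qed

lemma norm_range_proj_antimono: "a \<le> b \<Longrightarrow> norm (P b x) \<le> norm (P a x)"
proof -
  assume "a \<le> b"
  hence "(norm (P b x))\<^sup>2 \<le> (norm (P a x))\<^sup>2"
    using norm_range_proj_diff[of a b x] zero_le_power2[of "norm (P a x - P b x)"] by linarith
  thus ?thesis by (simp add: power2_le_iff_abs_le)
qed

lemma convergent_range_proj: "convergent (\<lambda>k. P k x)"
proof -
  define r where "r k = (norm (P k x))\<^sup>2" for k
  have "decseq r"
    unfolding r_def decseq_def using norm_range_proj_antimono by (simp add: power_mono)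
  then obtain L where "r \<longlonglongrightarrow> L"
    using decseq_convergent[of r 0] unfolding r_def by fastforce
  hence r_Cauchy: "Cauchy r" using convergent_Cauchy convergentI by blast
  have "Cauchy (\<lambda>k. P k x)"
  proof (rule CauchyI)
    fix e :: real assume e: "0 < e"
    then obtain M where M: "\<forall>m\<ge>M. \<forall>k\<ge>M. norm (r m - r k) < e\<^sup>2"
      using CauchyD[OF r_Cauchy, of "e\<^sup>2"] by auto
    have "norm (P m x - P k x) < e" if "m \<ge> M" "k \<ge> M" for m k
    proof -
      have "(norm (P m x - P k x))\<^sup>2 \<le> \<bar>r m - r k\<bar>"
        using norm_range_proj_diff[of m k x] norm_range_proj_diff[of k m x]
        by (cases "m \<le> k") (simp_all add: r_def norm_minus_commute)
      also have "\<dots> < e\<^sup>2" using M that by simp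
      finally show ?thesis using e by (simp add: power_less_imp_less_base)
    qed
    thus "\<exists>M. \<forall>m\<ge>M. \<forall>k\<ge>M. norm (P m x - P k x) < e" by blast
  qed
  thus ?thesis by (rule Cauchy_convergent)
qed

lemma range_proj_LIMSEQ: "(\<lambda>k. P k x) \<longlonglongrightarrow> U x"
  unfolding unitary_proj_def using convergent_range_proj convergent_LIMSEQ_iff by blast

lemma unitary_proj_eqI: "(\<lambda>k. P k x) \<longlonglongrightarrow> y \<Longrightarrow> U x = y"
  using range_proj_LIMSEQ LIMSEQ_unique by blast

lemma commute_unitary_proj:
  assumes "bounded_linear S" "\<And>k. commute S (P k)"
  shows "commute S U"
proof -
  have "S (U x) = U (S x)" for x
  proof -
    have "(\<lambda>k. S (P k x)) \<longlonglongrightarrow> S (U x)"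
      by (rule bounded_linear.tendsto[OF assms(1) range_proj_LIMSEQ])
    moreover have "S (P k x) = P k (S x)" for k
      using assms(2) by (simp add: commute_iff)
    ultimately show ?thesis by (simp add: unitary_proj_eqI[THEN sym])
  qed
  thus ?thesis by (simp add: commute_iff)
qed

lemma clinear_unitary_proj: "clinear U"
proof -
  have "U (x + y) = U x + U y" for x y
    by (intro unitary_proj_eqI)
      (simp add: linear_add[OF clinear_linear[OF clinear_range_proj]] tendsto_add range_proj_LIMSEQ)
  moreover have "U (scaleC c x) = scaleC c (U x)" for c x
    by (intro unitary_proj_eqI)
      (simp add: clinear_scaleC[OF clinear_range_proj]
        bounded_linear.tendsto[OF bounded_linear_scaleC range_proj_LIMSEQ])
  ultimately show ?thesis unfolding clinear_def by blast
qed

lemma bounded_linear_unitary_proj: "bounded_linear U"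
proof -
  have "norm (U x) \<le> norm x * 1" for x
  proof -
    have "norm (P k x) \<le> norm x" for k
      using norm_range_proj_antimono[of 0 k x] by simp
    thus ?thesis
      using LIMSEQ_le_const2[OF tendsto_norm[OF range_proj_LIMSEQ]] by simp
  qed
  thus ?thesis
    using linear_add[OF clinear_linear[OF clinear_unitary_proj]]
      linear_scale[OF clinear_linear[OF clinear_unitary_proj]]
    by (intro bounded_linear_intro[where K=1])
qed

lemma unitary_proj_selfadjoint: "cinner (U x) y = cinner x (U y)"
proof -
  have "(\<lambda>k. cinner (P k x) y) \<longlonglongrightarrow> cinner (U x) y"
    by (rule bounded_linear.tendsto[OF bounded_linear_cinner_left range_proj_LIMSEQ])
  moreover have "(\<lambda>k. cinner x (P k y)) \<longlonglongrightarrow> cinner x (U y)"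
    by (rule bounded_linear.tendsto[OF bounded_linear_cinner_right range_proj_LIMSEQ])
  ultimately show ?thesis using range_proj_selfadjoint LIMSEQ_unique by simp
qed

lemma unitary_proj_range_proj: "U (P m x) = U x"
proof (rule unitary_proj_eqI)
  have "(\<lambda>k. P (k + m) x) \<longlonglongrightarrow> U x"
    using LIMSEQ_ignore_initial_segment[OF range_proj_LIMSEQ] .
  moreover have "P (k + m) (P m x) = P (k + m) x" for k
    using range_proj_absorb(2)[of m "k + m"] by simp
  ultimately have "(\<lambda>k. P (k + m) (P m x)) \<longlonglongrightarrow> U x" by simp
  thus "(\<lambda>k. P k (P m x)) \<longlonglongrightarrow> U x"
    by (rule LIMSEQ_offset[where k=m])
qed

lemma range_proj_unitary_proj: "P m (U x) = U x"
  using commute_unitary_proj[OF bounded_linear_range_proj range_proj_commute, of m]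
    unitary_proj_range_proj
  by (simp add: commute_iff)

lemma unitary_proj_fixed_iff: "U x = x \<longleftrightarrow> (\<forall>k. P k x = x)"
proof
  assume "U x = x"
  thus "\<forall>k. P k x = x" using range_proj_unitary_proj[of _ x] by simp
next
  assume "\<forall>k. P k x = x"
  thus "U x = x" using unitary_proj_eqI[of x x] by simp
qed

lemma is_projection_unitary_proj: "is_projection U"
  unfolding is_projection_def
  using unitary_proj_selfadjoint unitary_proj_fixed_iff range_proj_unitary_proj by blast

lemma unitary_proj_fixed_points: "{x. U x = x} = H_uni V"
  unfolding H_uni_def by (auto simp: unitary_proj_fixed_iff simp flip: range_proj_fixed_points)

lemma range_proj_Suc_wandering:
  assumes "Vs w = 0"
  shows "P (Suc k) ((V ^^ k) w) = 0"
proof -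
  have "(Vs ^^ Suc k) ((V ^^ k) w) = 0" using assms by simp
  thus ?thesis by (simp add: range_proj_apply del: funpow.simps)
qed

lemma unitary_proj_wandering: "Vs w = 0 \<Longrightarrow> U ((V ^^ k) w) = 0"
  using unitary_proj_range_proj[of "Suc k" "(V ^^ k) w"] range_proj_Suc_wandering[of w k]
    linear_0[OF clinear_linear[OF clinear_unitary_proj]] by simp

abbreviation Q where "Q \<equiv> wandering_proj V Vs"

lemma range_proj_wandering_proj: "P k (Q k x) = Q k x" "P (Suc k) (Q k x) = 0"
  unfolding wandering_proj_def
  using range_proj_absorb[of k "Suc k"] range_proj_absorb[of k k]
    range_proj_absorb[of "Suc k" "Suc k"] linear_diff[OF clinear_linear[OF clinear_range_proj]]
  by simp_all

lemma is_projection_wandering_proj: "is_projection (Q k)"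
proof -
  have "Q k (Q k x) = Q k x" for x
    using range_proj_wandering_proj[of k x] by (simp add: wandering_proj_def)
  moreover have "cinner (Q k x) y = cinner x (Q k y)" for x y
    unfolding wandering_proj_def by (simp add: cinner_diff_left cinner_diff_right range_proj_selfadjoint)
  ultimately show ?thesis unfolding is_projection_def by blast
qed

lemma wandering_proj_fixed_points: "{x. Q k x = x} = (V ^^ k) ` kernel Vs"
proof (intro equalityI subsetI)
  fix x assume "x \<in> {x. Q k x = x}"
  hence x: "P k x = x" "P (Suc k) x = 0" using range_proj_wandering_proj[of k x] by simp_all
  have "(Vs ^^ Suc k) x = (Vs ^^ Suc k) (P (Suc k) x)"
    by (simp only: range_proj_apply left_inverse_funpow)
  hence "Vs ((Vs ^^ k) x) = 0"
    using x(2) by simp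
  moreover have "x = (V ^^ k) ((Vs ^^ k) x)" using x(1) by (simp add: range_proj_apply)
  ultimately show "x \<in> (V ^^ k) ` kernel Vs" unfolding kernel_def by blast
next
  fix x assume "x \<in> (V ^^ k) ` kernel Vs"
  then obtain w where "Vs w = 0" "x = (V ^^ k) w" unfolding kernel_def by blast
  thus "x \<in> {x. Q k x = x}"
    using range_proj_Suc_wandering range_proj_fixed_points[of k]
    by (auto simp: wandering_proj_def)
qed

lemma unitary_proj_H_iso:
  assumes "x \<in> H_iso V Vs"
  shows "U x = 0"
proof -
  define G where "G = (\<Union>k. (V ^^ k) ` kernel Vs)"
  have "U y = 0" if y: "y \<in> cspan G" for y
  proof -
    obtain F c where F: "y = (\<Sum>x\<in>F. scaleC (c x) x)" "finite F" "F \<subseteq> G"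
      using y unfolding cspan_def by blast
    have "U x = 0" if "x \<in> F" for x
      using that F(3) unitary_proj_wandering unfolding G_def kernel_def by auto
    thus ?thesis
      unfolding F(1) linear_sum[OF clinear_linear[OF clinear_unitary_proj]]
      by (simp add: clinear_scaleC[OF clinear_unitary_proj])
  qed
  moreover obtain s where s: "\<forall>m. s m \<in> cspan G" "s \<longlonglongrightarrow> x"
    using assms unfolding H_iso_def ccspan_def closure_sequential G_def by blast
  moreover have "(\<lambda>m. U (s m)) \<longlonglongrightarrow> U x"
    by (rule bounded_linear.tendsto[OF bounded_linear_unitary_proj s(2)])
  ultimately show ?thesis using LIMSEQ_const_iff[of 0 "U x"] by simp
qed

text \<open>The partial sums of \<open>\<Sum>k. Q k x\<close> are \<open>x - P m x\<close>, which tend to \<open>x - U x\<close>.\<close>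
lemma H_iso_if_unitary_proj_eq_0:
  assumes "U x = 0"
  shows "x \<in> H_iso V Vs"
proof -
  define G where "G = (\<Union>k. (V ^^ k) ` kernel Vs)"
  have "Q k x \<in> G" for k
    using is_projection_wandering_proj[of k] wandering_proj_fixed_points[of k]
    unfolding is_projection_def G_def by blast
  hence "(\<Sum>k<m. Q k x) \<in> cspan G" for m
    by (intro sum_in_cspan) auto
  moreover have "(\<lambda>m. \<Sum>k<m. Q k x) \<longlonglongrightarrow> x"
  proof -
    have "(\<Sum>k<m. Q k x) = x - P m x" for m
      unfolding wandering_proj_def using sum_lessThan_telescope'[of "\<lambda>k. P k x" m] by simp
    moreover have "(\<lambda>m. x - P m x) \<longlonglongrightarrow> x - U x"
      by (intro tendsto_diff tendsto_const range_proj_LIMSEQ)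
    ultimately show ?thesis using assms by simp
  qed
  ultimately show ?thesis
    unfolding H_iso_def ccspan_def closure_sequential G_def
    by (intro exI[of _ "\<lambda>m. \<Sum>k<m. Q k x"]) simp
qed

lemma H_iso_eq_kernel_unitary_proj: "H_iso V Vs = {x. U x = 0}"
  using unitary_proj_H_iso H_iso_if_unitary_proj_eq_0 by blast

lemma is_projection_complement_unitary_proj: "is_projection (\<lambda>x. x - U x)"
  using is_projection_unitary_proj linear_diff[OF clinear_linear[OF clinear_unitary_proj]]
  unfolding is_projection_def by (simp add: cinner_diff_left cinner_diff_right)

lemma complement_unitary_proj_fixed_points: "{x. x - U x = x} = H_iso V Vs"
  by (simp add: H_iso_eq_kernel_unitary_proj)

lemma range_bicommutantI:
  "bounded_linear E \<Longrightarrow> (\<And>S. bounded_linear S \<Longrightarrow> \<forall>k. commute S (P k) \<Longrightarrow> commute S E)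
    \<Longrightarrow> E \<in> range_bicommutant V Vs"
  unfolding range_bicommutant_def by blast

lemma range_proj_in_range_bicommutant: "P k \<in> range_bicommutant V Vs"
  by (rule range_bicommutantI[OF bounded_linear_range_proj]) blast

lemma unitary_proj_in_range_bicommutant: "U \<in> range_bicommutant V Vs"
  using commute_unitary_proj by (intro range_bicommutantI[OF bounded_linear_unitary_proj]) blast

lemma wandering_proj_in_range_bicommutant: "Q k \<in> range_bicommutant V Vs"
proof (rule range_bicommutantI)
  show "bounded_linear (Q k)"
    unfolding wandering_proj_def[abs_def] by (intro bounded_linear_sub bounded_linear_range_proj)
  show "commute S (Q k)" if "bounded_linear S" "\<forall>k. commute S (P k)" for S
    using that linear_diff[OF bounded_linear.linear[OF that(1)]]
    by (simp add: commute_iff wandering_proj_def)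
qed

lemma complement_unitary_proj_in_range_bicommutant: "(\<lambda>x. x - U x) \<in> range_bicommutant V Vs"
proof (rule range_bicommutantI)
  show "bounded_linear (\<lambda>x. x - U x)"
    by (intro bounded_linear_sub bounded_linear_ident bounded_linear_unitary_proj)
  show "commute S (\<lambda>x. x - U x)" if "bounded_linear S" "\<forall>k. commute S (P k)" for S
    using commute_unitary_proj[OF that(1)] that(2) linear_diff[OF bounded_linear.linear[OF that(1)]]
    by (simp add: commute_iff)
qed

end

section \<open>Doubly non-commuting tuples\<close>

locale doubly_noncommuting_tuple =
  fixes n :: nat and z :: "nat \<Rightarrow> nat \<Rightarrow> complex" and V Vs :: "nat \<Rightarrow> 'a::chilbert_space \<Rightarrow> 'a"
  assumes doubly_noncommuting: "doubly_noncommuting n z V Vs"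
begin

lemma isometry_with_adjoint: "i \<in> {1..n} \<Longrightarrow> isometry_with_adjoint (V i) (Vs i)"
  using doubly_noncommuting unfolding doubly_noncommuting_def by unfold_locales auto

lemma z_swap: "i \<in> {1..n} \<Longrightarrow> j \<in> {1..n} \<Longrightarrow> i \<noteq> j \<Longrightarrow> z j i = cnj (z i j)"
  using doubly_noncommuting unfolding doubly_noncommuting_def by blast

lemma z_unimodular: "i \<in> {1..n} \<Longrightarrow> j \<in> {1..n} \<Longrightarrow> i \<noteq> j \<Longrightarrow> z i j * cnj (z i j) = 1"
  using doubly_noncommuting unfolding doubly_noncommuting_def
  by (metis complex_norm_square of_real_1 power_one)

lemma Vs_V_commute:
  "i \<in> {1..n} \<Longrightarrow> j \<in> {1..n} \<Longrightarrow> i \<noteq> j \<Longrightarrow> Vs i (V j x) = scaleC (cnj (z i j)) (V j (Vs i x))"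
  using doubly_noncommuting unfolding doubly_noncommuting_def by blast

lemma V_Vs_commute:
  assumes "i \<in> {1..n}" "j \<in> {1..n}" "i \<noteq> j"
  shows "V i (Vs j x) = scaleC (cnj (z i j)) (Vs j (V i x))"
  using Vs_V_commute[of j i x] z_swap[OF assms] z_unimodular[OF assms] assms
  by (simp add: scaleC_scaleC scaleC_one mult.commute)

text \<open>This relation is not among the hypotheses: the two vectors have the norm of \<open>x\<close>, and
  the assumed relation for \<open>Vs i\<close> and \<open>V j\<close> makes their inner product equal to \<open>(norm x)\<^sup>2\<close>.\<close>
lemma V_V_commute:
  assumes ij: "i \<in> {1..n}" "j \<in> {1..n}" "i \<noteq> j"
  shows "V i (V j x) = scaleC (z i j) (V j (V i x))"
proof -
  interpret i: isometry_with_adjoint "V i" "Vs i" using isometry_with_adjoint ij by blast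
  interpret j: isometry_with_adjoint "V j" "Vs j" using isometry_with_adjoint ij by blast
  define a where "a = V i (V j x)"
  define b where "b = V j (V i x)"
  have aa: "cinner a a = cinner x x" and bb: "cinner b b = cinner x x"
    unfolding a_def b_def by (simp_all add: i.cinner_V_V j.cinner_V_V)
  have ab: "cinner a b = cnj (z i j) * cinner x x"
    unfolding a_def b_def
    by (simp add: i.cinner_V_left Vs_V_commute[OF ij] cinner_scaleC_right j.cinner_V_V)
  have ba: "cinner b a = z i j * cinner x x"
    using ab cinner_commute[of b a] cinner_commute[of x x] by simp
  have "cinner (a - scaleC (z i j) b) (a - scaleC (z i j) b)
        = cinner x x * (1 - z i j * cnj (z i j))"
    by (simp add: cinner_diff_left cinner_diff_right cinner_scaleC_left cinner_scaleC_right
        aa bb ab ba algebra_simps)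
  also have "\<dots> = 0" using z_unimodular[OF ij] by simp
  finally have "a - scaleC (z i j) b = 0"
    using cinner_eq_zero_iff by blast
  thus ?thesis unfolding a_def b_def by simp
qed

lemma Vs_Vs_commute:
  assumes ij: "i \<in> {1..n}" "j \<in> {1..n}" "i \<noteq> j"
  shows "Vs i (Vs j x) = scaleC (z i j) (Vs j (Vs i x))"
proof (rule cinner_ext)
  interpret i: isometry_with_adjoint "V i" "Vs i" using isometry_with_adjoint ij by blast
  interpret j: isometry_with_adjoint "V j" "Vs j" using isometry_with_adjoint ij by blast
  fix y
  have "cinner y (Vs i (Vs j x)) = cinner (V j (V i y)) x"
    by (simp add: i.cinner_V_left j.cinner_V_left)
  also have "\<dots> = cinner (scaleC (z j i) (V i (V j y))) x"
    using V_V_commute[of j i] ij by simp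
  also have "\<dots> = cinner y (scaleC (z i j) (Vs j (Vs i x)))"
    using z_swap[OF ij]
    by (simp add: cinner_scaleC_left cinner_scaleC_right i.cinner_V_left j.cinner_V_left)
  finally show "cinner y (Vs i (Vs j x)) = cinner y (scaleC (z i j) (Vs j (Vs i x)))" .
qed

lemma range_proj_commute_V:
  assumes ij: "i \<in> {1..n}" "j \<in> {1..n}" "i \<noteq> j"
  shows "commute (V j ^^ b) (range_proj (V i) (Vs i) a)"
    and "commute (Vs j ^^ b) (range_proj (V i) (Vs i) a)"
proof -
  interpret i: isometry_with_adjoint "V i" "Vs i" using isometry_with_adjoint ij by blast
  have "i.P a (V j x) = V j (i.P a x)" for x
    unfolding i.range_proj_apply
    by (rule funpow_comp_commute_twisted[OF i.clinear_Vs i.clinear_V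
          Vs_V_commute[OF ij] V_V_commute[OF ij]])
      (simp add: z_unimodular[OF ij])
  thus "commute (V j ^^ b) (i.P a)"
    by (simp add: commute_iff funpow_commute)
  have "i.P a (Vs j x) = Vs j (i.P a x)" for x
    unfolding i.range_proj_apply
    by (rule funpow_comp_commute_twisted[OF i.clinear_Vs i.clinear_V
          Vs_Vs_commute[OF ij] V_Vs_commute[OF ij]])
      (simp add: z_unimodular[OF ij] mult.commute)
  thus "commute (Vs j ^^ b) (i.P a)"
    by (simp add: commute_iff funpow_commute)
qed

lemma commute_range_bicommutant_V:
  assumes ij: "i \<in> {1..n}" "j \<in> {1..n}" "i \<noteq> j" and E: "E \<in> range_bicommutant (V i) (Vs i)"
  shows "commute (V j ^^ b) E" "commute (Vs j ^^ b) E"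
proof -
  interpret j: isometry_with_adjoint "V j" "Vs j" using isometry_with_adjoint ij by blast
  show "commute (V j ^^ b) E" "commute (Vs j ^^ b) E"
    using E range_proj_commute_V[OF ij]
      bounded_linear_funpow[OF j.bounded_linear_V] bounded_linear_funpow[OF j.bounded_linear_Vs]
    unfolding range_bicommutant_def by blast+
qed

lemma commute_range_bicommutants:
  assumes ij: "i \<in> {1..n}" "j \<in> {1..n}" "i \<noteq> j"
    and Ei: "Ei \<in> range_bicommutant (V i) (Vs i)" and Ej: "Ej \<in> range_bicommutant (V j) (Vs j)"
  shows "commute Ei Ej"
proof -
  interpret i: isometry_with_adjoint "V i" "Vs i" using isometry_with_adjoint ij by blast
  have "commute (V i ^^ a \<circ> Vs i ^^ a) Ej" for a
    using commute_range_bicommutant_V[OF ij(2,1) ij(3)[symmetric] Ej]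
    unfolding commute_def by (metis comp_assoc)
  hence "commute (i.P a) Ej" for a unfolding range_proj_def .
  hence "commute Ej (i.P a)" for a by (rule commute_sym)
  thus ?thesis
    using Ei Ej unfolding range_bicommutant_def by (blast intro: commute_sym)
qed

lemma fixed_points_range_bicommutant_preserved:
  assumes "i \<in> {1..n}" "j \<in> {1..n}" "i \<noteq> j" "E \<in> range_bicommutant (V i) (Vs i)"
    and "x \<in> {x. E x = x}"
  shows "(V j ^^ b) x \<in> {x. E x = x} \<and> (Vs j ^^ b) x \<in> {x. E x = x}"
  using commute_fixed_points[OF commute_range_bicommutant_V(1)[OF assms(1-4)]]
    commute_fixed_points[OF commute_range_bicommutant_V(2)[OF assms(1-4)]] assms(5)
  by simp

lemma reduces_fixed_points_range_bicommutant:
  assumes T: "bounded_linear T" "\<And>i k. i \<in> {1..n} \<Longrightarrow> commute T (range_proj (V i) (Vs i) k)"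
    and E: "\<And>j. j \<in> {1..n} \<Longrightarrow> E j \<in> range_bicommutant (V j) (Vs j) \<and> is_projection (E j)"
  shows "reduces (\<Inter>j\<in>{1..n}. {x. E j x = x}) T"
proof (rule reduces_common_fixed_points)
  show "commute (E i) (E j)" if "i \<in> {1..n}" "j \<in> {1..n}" for i j
    using that E commute_range_bicommutants by (cases "i = j") (auto simp: commute_def)
  show "commute T (E j)" if "j \<in> {1..n}" for j
    using that E T unfolding range_bicommutant_def by blast
  show "T 0 = 0" using T(1) by (simp add: linear_simps)
qed (use E in auto)

lemma range_funpow_preserved:
  assumes ij: "i \<in> {1..n}" "j \<in> {1..n}" "i \<noteq> j" and x: "x \<in> range (V i ^^ a)"
  shows "(V j ^^ b) x \<in> range (V i ^^ a) \<and> (Vs j ^^ b) x \<in> range (V i ^^ a)"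
proof -
  interpret i: isometry_with_adjoint "V i" "Vs i" using isometry_with_adjoint ij by blast
  show ?thesis
    using fixed_points_range_bicommutant_preserved[OF ij i.range_proj_in_range_bicommutant] x
    unfolding i.range_proj_fixed_points by blast
qed

lemma wandering_subspace_preserved:
  assumes ij: "i \<in> {1..n}" "j \<in> {1..n}" "i \<noteq> j" and x: "x \<in> (V i ^^ a) ` kernel (Vs i)"
  shows "(V j ^^ b) x \<in> (V i ^^ a) ` kernel (Vs i) \<and> (Vs j ^^ b) x \<in> (V i ^^ a) ` kernel (Vs i)"
proof -
  interpret i: isometry_with_adjoint "V i" "Vs i" using isometry_with_adjoint ij by blast
  show ?thesis
    using fixed_points_range_bicommutant_preserved[OF ij i.wandering_proj_in_range_bicommutant] x
    unfolding i.wandering_proj_fixed_points by blast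
qed

lemma kernel_Vs_preserved:
  assumes "i \<in> {1..n}" "j \<in> {1..n}" "i \<noteq> j" "x \<in> kernel (Vs i)"
  shows "(V j ^^ b) x \<in> kernel (Vs i) \<and> (Vs j ^^ b) x \<in> kernel (Vs i)"
  using wandering_subspace_preserved[OF assms(1-3), of x 0 b] assms(4) by simp

lemma H_uni_preserved:
  assumes ij: "i \<in> {1..n}" "j \<in> {1..n}" "i \<noteq> j" and x: "x \<in> H_uni (V i)"
  shows "(V j ^^ b) x \<in> H_uni (V i) \<and> (Vs j ^^ b) x \<in> H_uni (V i)"
proof -
  interpret i: isometry_with_adjoint "V i" "Vs i" using isometry_with_adjoint ij by blast
  show ?thesis
    using fixed_points_range_bicommutant_preserved[OF ij i.unitary_proj_in_range_bicommutant] x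
    unfolding i.unitary_proj_fixed_points by blast
qed

lemma W_A_eq:
  assumes A: "A \<subseteq> {1..n}"
  shows "W_A n V Vs A = (\<Inter>i\<in>A. kernel (Vs i)) \<inter> (\<Inter>j\<in>{1..n} - A. H_uni (V j))"
proof -
  define B where "B = {1..n} - A"
  define K where "K = (\<Inter>i\<in>A. kernel (Vs i))"
  have "finite B" unfolding B_def by simp
  moreover have "Vs j (V j x) = x" if "j \<in> B" for j x
    using that isometry_with_adjoint.left_inverse[OF isometry_with_adjoint] unfolding B_def by blast
  moreover have "(V j ^^ b) x \<in> range (V l ^^ a) \<and> (Vs j ^^ b) x \<in> range (V l ^^ a)"
    if "j \<in> B" "l \<in> B" "j \<noteq> l" "x \<in> range (V l ^^ a)" for j l a b x
    by (rule range_funpow_preserved) (use that in \<open>auto simp: B_def\<close>)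
  moreover have "(V j ^^ b) x \<in> K \<and> (Vs j ^^ b) x \<in> K" if "j \<in> B" "x \<in> K" for j b x
  proof -
    have "(V j ^^ b) x \<in> kernel (Vs i) \<and> (Vs j ^^ b) x \<in> kernel (Vs i)" if "i \<in> A" for i
    proof (rule kernel_Vs_preserved)
      show "i \<in> {1..n}" "j \<in> {1..n}" "i \<noteq> j" using that \<open>j \<in> B\<close> A unfolding B_def by auto
      show "x \<in> kernel (Vs i)" using that \<open>x \<in> K\<close> unfolding K_def by blast
    qed
    thus ?thesis unfolding K_def by blast
  qed
  ultimately have "prod_pow V B m ` (K \<inter> (\<Inter>j\<in>B. UNIV)) = K \<inter> (\<Inter>j\<in>B. range (V j ^^ m j))" for m
    by (rule image_prod_pow[of B Vs V "\<lambda>_. UNIV" K m])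
  hence "prod_pow V B m ` K = K \<inter> (\<Inter>j\<in>B. range (V j ^^ m j))" for m
    by simp
  moreover have "(\<Inter>m. \<Inter>j\<in>B. range (V j ^^ m j)) = (\<Inter>j\<in>B. H_uni (V j))"
  proof (intro equalityI subsetI)
    fix x assume "x \<in> (\<Inter>m. \<Inter>j\<in>B. range (V j ^^ m j))"
    hence "x \<in> range (V j ^^ k)" if "j \<in> B" for j k
      using that by (fastforce dest: spec[of _ "\<lambda>_. k"])
    thus "x \<in> (\<Inter>j\<in>B. H_uni (V j))" unfolding H_uni_def by blast
  qed (auto simp: H_uni_def)
  ultimately show ?thesis
    unfolding W_A_def K_def[symmetric] B_def[symmetric] by auto
qed

lemma image_prod_pow_W_A:
  assumes A: "A \<subseteq> {1..n}"
  shows "prod_pow V A k ` W_A n V Vs A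
           = (\<Inter>i\<in>A. (V i ^^ k i) ` kernel (Vs i)) \<inter> (\<Inter>j\<in>{1..n} - A. H_uni (V j))"
proof -
  define C where "C = (\<Inter>j\<in>{1..n} - A. H_uni (V j))"
  have "finite A" using A finite_subset by blast
  moreover have "Vs j (V j x) = x" if "j \<in> A" for j x
    using that A isometry_with_adjoint.left_inverse[OF isometry_with_adjoint] by blast
  moreover have "(V j ^^ b) x \<in> (V l ^^ a) ` kernel (Vs l) \<and> (Vs j ^^ b) x \<in> (V l ^^ a) ` kernel (Vs l)"
    if "j \<in> A" "l \<in> A" "j \<noteq> l" "x \<in> (V l ^^ a) ` kernel (Vs l)" for j l a b x
    by (rule wandering_subspace_preserved) (use that A in auto)
  moreover have "(V j ^^ b) x \<in> C \<and> (Vs j ^^ b) x \<in> C" if "j \<in> A" "x \<in> C" for j b x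
  proof -
    have "(V j ^^ b) x \<in> H_uni (V i) \<and> (Vs j ^^ b) x \<in> H_uni (V i)" if "i \<in> {1..n} - A" for i
    proof (rule H_uni_preserved)
      show "i \<in> {1..n}" "j \<in> {1..n}" "i \<noteq> j" using that \<open>j \<in> A\<close> A by auto
      show "x \<in> H_uni (V i)" using that \<open>x \<in> C\<close> unfolding C_def by blast
    qed
    thus ?thesis unfolding C_def by blast
  qed
  ultimately have "prod_pow V A k ` (C \<inter> (\<Inter>i\<in>A. kernel (Vs i)))
          = C \<inter> (\<Inter>i\<in>A. (V i ^^ k i) ` kernel (Vs i))"
    by (rule image_prod_pow[of A Vs V "\<lambda>i. kernel (Vs i)" C k])
  thus ?thesis
    unfolding W_A_eq[OF A] C_def by (simp add: Int_commute)
qed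

end

lemma prod_pow_zero: "prod_pow V B (\<lambda>_. 0) = id"
proof -
  have "foldr (\<lambda>j f. (V j ^^ 0) \<circ> f) L id = id" for L :: "nat list"
    by (induction L) simp_all
  thus ?thesis unfolding prod_pow_def .
qed

context doubly_noncommuting_tuple
begin

lemma reduces_fixed_points_split:
  assumes T: "bounded_linear T" "\<And>i k. i \<in> {1..n} \<Longrightarrow> commute T (range_proj (V i) (Vs i) k)"
    and A: "A \<subseteq> {1..n}"
    and F: "\<And>i. i \<in> A \<Longrightarrow> F i \<in> range_bicommutant (V i) (Vs i) \<and> is_projection (F i)"
    and G: "\<And>j. j \<in> {1..n} - A \<Longrightarrow> G j \<in> range_bicommutant (V j) (Vs j) \<and> is_projection (G j)"
  shows "reduces ((\<Inter>i\<in>A. {x. F i x = x}) \<inter> (\<Inter>j\<in>{1..n} - A. {x. G j x = x})) T"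
proof -
  define E where "E j = (if j \<in> A then F j else G j)" for j
  have "(\<Inter>i\<in>A. {x. F i x = x}) \<inter> (\<Inter>j\<in>{1..n} - A. {x. G j x = x}) = (\<Inter>j\<in>{1..n}. {x. E j x = x})"
  proof (intro equalityI subsetI)
    fix x assume x: "x \<in> (\<Inter>j\<in>{1..n}. {x. E j x = x})"
    have "E j x = x" if "j \<in> {1..n}" for j using x that by blast
    hence "F i x = x" if "i \<in> A" for i
      using that subsetD[OF A] unfolding E_def by metis
    moreover have "G j x = x" if "j \<in> {1..n} - A" for j
      using that \<open>\<And>j. j \<in> {1..n} \<Longrightarrow> E j x = x\<close>[of j] unfolding E_def by simp
    ultimately show "x \<in> (\<Inter>i\<in>A. {x. F i x = x}) \<inter> (\<Inter>j\<in>{1..n} - A. {x. G j x = x})" by blast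
  qed (auto simp: E_def)
  moreover have "reduces (\<Inter>j\<in>{1..n}. {x. E j x = x}) T"
    by (rule reduces_fixed_points_range_bicommutant[OF T]) (use F G in \<open>auto simp: E_def\<close>)
  ultimately show ?thesis by simp
qed

lemma reduces_image_prod_pow_W_A:
  assumes T: "bounded_linear T" "\<And>i k. i \<in> {1..n} \<Longrightarrow> commute T (range_proj (V i) (Vs i) k)"
    and A: "A \<subseteq> {1..n}"
  shows "reduces (prod_pow V A k ` W_A n V Vs A) T"
proof -
  have "(\<Inter>i\<in>A. (V i ^^ k i) ` kernel (Vs i)) = (\<Inter>i\<in>A. {x. wandering_proj (V i) (Vs i) (k i) x = x})"
    using isometry_with_adjoint.wandering_proj_fixed_points[OF isometry_with_adjoint, OF subsetD[OF A]]
    by (intro INF_cong[OF refl]) simp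
  moreover have "(\<Inter>j\<in>{1..n} - A. H_uni (V j)) = (\<Inter>j\<in>{1..n} - A. {x. unitary_proj (V j) (Vs j) x = x})"
    using isometry_with_adjoint.unitary_proj_fixed_points[OF isometry_with_adjoint]
    by (intro INF_cong[OF refl]) auto
  ultimately show ?thesis
    unfolding image_prod_pow_W_A[OF A]
    using isometry_with_adjoint.wandering_proj_in_range_bicommutant[OF isometry_with_adjoint]
      isometry_with_adjoint.is_projection_wandering_proj[OF isometry_with_adjoint]
      isometry_with_adjoint.unitary_proj_in_range_bicommutant[OF isometry_with_adjoint]
      isometry_with_adjoint.is_projection_unitary_proj[OF isometry_with_adjoint] A
    by (simp only:) (rule reduces_fixed_points_split[OF T A]; auto)
qed

lemma reduces_H_A:
  assumes T: "bounded_linear T" "\<And>i k. i \<in> {1..n} \<Longrightarrow> commute T (range_proj (V i) (Vs i) k)"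
    and A: "A \<subseteq> {1..n}"
  shows "reduces (H_A n V Vs A) T"
proof -
  have "(\<Inter>i\<in>A. H_iso (V i) (Vs i)) = (\<Inter>i\<in>A. {x. x - unitary_proj (V i) (Vs i) x = x})"
    using isometry_with_adjoint.complement_unitary_proj_fixed_points[OF isometry_with_adjoint, OF subsetD[OF A]]
    by (intro INF_cong[OF refl]) simp
  moreover have "(\<Inter>j\<in>{1..n} - A. H_uni (V j)) = (\<Inter>j\<in>{1..n} - A. {x. unitary_proj (V j) (Vs j) x = x})"
    using isometry_with_adjoint.unitary_proj_fixed_points[OF isometry_with_adjoint]
    by (intro INF_cong[OF refl]) auto
  ultimately show ?thesis
    unfolding H_A_def
    using isometry_with_adjoint.complement_unitary_proj_in_range_bicommutant[OF isometry_with_adjoint]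
      isometry_with_adjoint.is_projection_complement_unitary_proj[OF isometry_with_adjoint]
      isometry_with_adjoint.unitary_proj_in_range_bicommutant[OF isometry_with_adjoint]
      isometry_with_adjoint.is_projection_unitary_proj[OF isometry_with_adjoint] A
    by (simp only:) (rule reduces_fixed_points_split[OF T A]; auto)
qed

end

theorem proposition3p10:
  fixes n :: nat
    and z :: "nat \<Rightarrow> nat \<Rightarrow> complex"
    and V Vs :: "nat \<Rightarrow> 'a::chilbert_space \<Rightarrow> 'a"
    and T :: "'a \<Rightarrow> 'a"
  assumes "n \<ge> 1"
    and "doubly_noncommuting n z V Vs"
    and "bounded_clinear T"
    and "\<forall>i\<in>{1..n}. \<forall>k\<ge>1. T \<circ> ((V i ^^ k) \<circ> (Vs i ^^ k)) = ((V i ^^ k) \<circ> (Vs i ^^ k)) \<circ> T"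
  shows "\<forall>A\<subseteq>{1..n}.
           (\<forall>k::nat \<Rightarrow> nat. reduces (prod_pow V A k ` W_A n V Vs A) T)
           \<and> reduces (W_A n V Vs A) T
           \<and> reduces (H_A n V Vs A) T"
proof (intro allI impI conjI)
  interpret doubly_noncommuting_tuple n z V Vs by (rule doubly_noncommuting_tuple.intro) fact
  have T: "bounded_linear T" using assms(3) by (rule bounded_clinear_bounded_linear)
  have TP: "commute T (range_proj (V i) (Vs i) k)" if "i \<in> {1..n}" for i k
    using assms(4) that by (cases "k = 0") (auto simp: commute_def range_proj_def)
  show "reduces (prod_pow V A k ` W_A n V Vs A) T" if "A \<subseteq> {1..n}" for A k
    by (rule reduces_image_prod_pow_W_A[OF T TP that])
  show "reduces (W_A n V Vs A) T" if "A \<subseteq> {1..n}" for A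
    using reduces_image_prod_pow_W_A[OF T TP that, of "\<lambda>_. 0"] by (simp add: prod_pow_zero)
  show "reduces (H_A n V Vs A) T" if "A \<subseteq> {1..n}" for A
    by (rule reduces_H_A[OF T TP that])
qed

end
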